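(* Let $E=\{(x,y)\in\mathbb{R}^2: (x/a)^2+(y/b)^2<1\}$ with $0<b\le a$. Then \[ \frac12\left(\frac ab+\frac ba\right)\le P(E)\le\frac{1}{\sin\frac{b\pi}{2a}}\le\frac{2}{\pi}\left(\frac ab+\frac ba\right). \]
   Context: For four distinct points $a_1,a_2,a_3,a_4\in\mathbb{R}^2$ set $p(a_1,a_2,a_3,a_4)=\frac{|a_1-a_2||a_3-a_4|+|a_1-a_4||a_2-a_3|}{|a_1-a_3||a_2-a_4|}$. For a domain $D$ whose boundary is a Jordan curve, $P(D)=\sup p(a_1,a_2,a_3,a_4)$ over all distinct $a_1,a_2,a_3,a_4\in\partial D$ occurring in this order when $\partial D$ is traversed in the positive direction. *)

theory Defs
  imports "HOL-Analysis.Analysis"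
begin

definition pfun :: "real^2 \<Rightarrow> real^2 \<Rightarrow> real^2 \<Rightarrow> real^2 \<Rightarrow> real" where
  "pfun a1 a2 a3 a4 =
     (dist a1 a2 * dist a3 a4 + dist a1 a4 * dist a2 a3) / (dist a1 a3 * dist a2 a4)"

text \<open>The order is given by any simple closed
  parametrization g of the boundary; p is invariant under cyclic shifts and reversal, so the
  choice of parametrization/orientation does not matter. Valued in ereal so that an
  unbounded set gives infinity.\<close>
definition PJ :: "(real^2) set \<Rightarrow> ereal" where
  "PJ D = (SUP q \<in> {(a1, a2, a3, a4). \<exists>g s1 s2 s3 s4.
              simple_path g \<and> pathfinish g = pathstart g \<and> path_image g = frontier D \<and>
              0 \<le> s1 \<and> s1 < s2 \<and> s2 < s3 \<and> s3 < s4 \<and> s4 < 1 \<and>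
              a1 = g s1 \<and> a2 = g s2 \<and> a3 = g s3 \<and> a4 = g s4}.
            ereal (case q of (a1, a2, a3, a4) \<Rightarrow> pfun a1 a2 a3 a4))"

definition ellipse :: "real \<Rightarrow> real \<Rightarrow> (real^2) set" where
  "ellipse a b = {x. (x$1 / a)^2 + (x$2 / b)^2 < 1}"

end

theory Submission
  imports Defs
begin

text \<open>
  On the boundary \<open>t \<mapsto> (a cos t, b sin t)\<close> the chord between parameters \<open>u < v < u + 2\<pi>\<close>
  has length \<open>2 sin((v-u)/2) \<surd>(P - Q cos(u+v))\<close>, where \<open>P = (a\<^sup>2+b\<^sup>2)/2\<close>, \<open>Q = (a\<^sup>2-b\<^sup>2)/2\<close>.
  With half-gaps \<open>x, y, z\<close> and half-sum \<open>\<phi>\<close> of four ordered parameters, each product of opposite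
  chords has the form \<open>sin \<cdot> sin \<cdot> \<surd>((P - Q cos(\<phi>-\<psi>))(P - Q cos(\<phi>+\<psi>)))\<close>, and this root
  lies between \<open>(ab/P)(P - Q cos \<phi> cos \<psi>)\<close> and \<open>P - Q cos \<phi> cos \<psi>\<close>. Bounding the numerator of
  \<open>p\<close> from above and the denominator from below, the weighted Ptolemy identity for sines makes the
  two sides match, so \<open>p \<le> P/(ab) = (a/b + b/a)/2\<close>, with equality at the four vertices; hence
  \<open>P(E) = (a/b + b/a)/2\<close>. An arbitrary simple parametrization of the boundary is reduced to the
  standard one by lifting it to a continuous angle, which is monotone on \<open>[s\<^sub>1, s\<^sub>4]\<close> and winds
  less than once there. The remaining inequalities are
  \<open>\<pi>\<^sup>2x/(\<pi>\<^sup>2+4x\<^sup>2) \<le> sin x \<le> 4\<pi>x/(\<pi>\<^sup>2+4x\<^sup>2)\<close> on \<open>[0, \<pi>/2]\<close>, taken at \<open>x = b\<pi>/(2a)\<close>.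
\<close>

lemma cos_product_factor_eq:
  fixes P Q phi psi :: real
  shows "(P - Q * cos (phi - psi)) * (P - Q * cos (phi + psi))
       = (P - Q * cos phi * cos psi)^2 - Q^2 * (sin phi)^2 * (sin psi)^2"
  unfolding cos_diff cos_add by (simp add: power2_eq_square algebra_simps)

lemma cos_factor_nonneg:
  fixes P Q u :: real
  assumes "0 \<le> Q" "Q \<le> P" "\<bar>u\<bar> \<le> 1"
  shows "0 \<le> P - Q * u"
proof -
  have "Q * u \<le> Q * 1" using assms by (intro mult_left_mono) auto
  with assms show ?thesis by simp
qed

lemma sqrt_cos_product_le:
  fixes P Q phi psi :: real
  assumes "0 \<le> Q" "Q \<le> P"
  shows "sqrt ((P - Q * cos (phi - psi)) * (P - Q * cos (phi + psi))) \<le> P - Q * cos phi * cos psi"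
proof (rule real_le_lsqrt)
  show "0 \<le> P - Q * cos phi * cos psi"
    using cos_factor_nonneg[OF assms] by (simp add: abs_mult mult_le_one mult.assoc)
qed (simp_all add: cos_product_factor_eq)

lemma sqrt_cos_product_ge:
  fixes P Q phi psi :: real
  assumes "0 \<le> Q" "Q \<le> P"
  shows "sqrt (P^2 - Q^2) * (P - Q * cos phi * cos psi)
       \<le> P * sqrt ((P - Q * cos (phi - psi)) * (P - Q * cos (phi + psi)))"
proof -
  define C c where "C = \<bar>cos phi\<bar>" and "c = \<bar>cos psi\<bar>"
  have Cc: "0 \<le> C" "C \<le> 1" "0 \<le> c" "c \<le> 1" unfolding C_def c_def by simp_all
  define L where "L = P - Q * cos phi * cos psi"
  have "Q * (cos phi * cos psi) \<le> Q * (C * c)"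
    using assms by (intro mult_left_mono) (auto simp: C_def c_def abs_mult[symmetric])
  also have "\<dots> \<le> P * (C * c)" using assms Cc by (intro mult_right_mono) auto
  finally have L_ge: "P * (1 - C * c) \<le> L" unfolding L_def by (simp add: algebra_simps)
  have "(1 - C^2) * (1 - c^2) \<le> (1 - C * c)^2"
    using zero_le_power2[of "C - c"] by (simp add: power2_eq_square algebra_simps)
  have "P^2 * ((sin phi)^2 * (sin psi)^2) = P^2 * ((1 - C^2) * (1 - c^2))"
    unfolding C_def c_def by (simp add: sin_squared_eq)
  also have "\<dots> \<le> (P * (1 - C * c))^2"
    using \<open>(1 - C^2) * (1 - c^2) \<le> (1 - C * c)^2\<close> by (simp add: power_mult_distrib mult_left_mono)
  also have "\<dots> \<le> L^2"
    using L_ge assms Cc by (intro power_mono) (auto simp: mult_le_one)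
  finally have key: "P^2 * ((sin phi)^2 * (sin psi)^2) \<le> L^2" .
  have "(P^2 - Q^2) * L^2 \<le> P^2 * (L^2 - Q^2 * (sin phi)^2 * (sin psi)^2)"
    using mult_left_mono[OF key, of "Q^2"] by (simp add: algebra_simps)
  then have "sqrt ((P^2 - Q^2) * L^2) \<le> sqrt (P^2 * (L^2 - Q^2 * (sin phi)^2 * (sin psi)^2))"
    by (rule real_sqrt_le_mono)
  moreover have "0 \<le> L" unfolding L_def
    using cos_factor_nonneg[OF assms] by (simp add: abs_mult mult_le_one mult.assoc)
  ultimately show ?thesis
    using assms unfolding cos_product_factor_eq L_def[symmetric] by (simp add: real_sqrt_mult)
qed

lemma sin_ptolemy_weighted:
  fixes A B x y z :: real
  shows "sin x * sin z * (A - B * cos (x + 2*y + z)) + sin (x + y + z) * sin y * (A - B * cos (x - z))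
       = sin (x + y) * sin (y + z) * (A - B * cos (x + z))"
proof -
  have "sin x * sin z = (cos (x - z) - cos (x + z)) / 2"
    by (simp add: sin_times_sin)
  moreover have "sin (x + y + z) * sin y = (cos (x + z) - cos (x + 2*y + z)) / 2"
    using sin_times_sin[of "x + y + z" y] by (simp add: algebra_simps)
  moreover have "sin (x + y) * sin (y + z) = (cos (x - z) - cos (x + 2*y + z)) / 2"
    using sin_times_sin[of "x + y" "y + z"] by (simp add: algebra_simps)
  ultimately show ?thesis by (simp only:) (simp add: field_simps)
qed

lemma chord_sum_le:
  fixes P Q phi x y z :: real
  assumes "0 \<le> Q" "Q \<le> P"
    and "0 \<le> sin x" "0 \<le> sin y" "0 \<le> sin z" "0 \<le> sin (x + y + z)"
  defines "R \<equiv> \<lambda>psi. sqrt ((P - Q * cos (phi - psi)) * (P - Q * cos (phi + psi)))"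
  shows "sqrt (P^2 - Q^2) * (sin x * sin z * R (x + 2*y + z) + sin (x + y + z) * sin y * R (x - z))
       \<le> P * (sin (x + y) * sin (y + z) * R (x + z))"
proof -
  let ?C = "Q * cos phi"
  have "sin x * sin z * R (x + 2*y + z) + sin (x + y + z) * sin y * R (x - z)
      \<le> sin x * sin z * (P - ?C * cos (x + 2*y + z)) + sin (x + y + z) * sin y * (P - ?C * cos (x - z))"
    unfolding R_def using assms sqrt_cos_product_le[OF assms(1,2)]
    by (intro add_mono mult_left_mono) (auto simp: mult.assoc)
  also have "\<dots> = sin (x + y) * sin (y + z) * (P - ?C * cos (x + z))"
    by (rule sin_ptolemy_weighted)
  finally have "sqrt (P^2 - Q^2) * (sin x * sin z * R (x + 2*y + z) + sin (x + y + z) * sin y * R (x - z))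
      \<le> sqrt (P^2 - Q^2) * (sin (x + y) * sin (y + z) * (P - ?C * cos (x + z)))"
    using assms by (intro mult_left_mono) (simp_all add: power_mono)
  also have "\<dots> = sin (x + y) * sin (y + z) * (sqrt (P^2 - Q^2) * (P - ?C * cos (x + z)))"
    by (simp only: mult_ac)
  also have "\<dots> \<le> sin (x + y) * sin (y + z) * (P * R (x + z))"
  proof (rule mult_left_mono)
    show "sqrt (P^2 - Q^2) * (P - ?C * cos (x + z)) \<le> P * R (x + z)"
      unfolding R_def using sqrt_cos_product_ge[OF assms(1,2)] by (simp add: mult.assoc)
    have "sin x * sin z + sin (x + y + z) * sin y = sin (x + y) * sin (y + z)"
      using sin_ptolemy_weighted[where A = 1 and B = 0] by simp
    then show "0 \<le> sin (x + y) * sin (y + z)" using assms by (metis add_nonneg_nonneg mult_nonneg_nonneg)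
  qed
  finally show ?thesis by (simp add: mult_ac)
qed

section \<open>Chords of the ellipse\<close>

definition ellipse_point :: "real \<Rightarrow> real \<Rightarrow> real \<Rightarrow> real^2" where
  "ellipse_point a b t = vector [a * cos t, b * sin t]"

lemma dist_vec2: "dist x y = sqrt ((x$1 - y$1)^2 + (x$2 - y$2)^2)" for x y :: "real^2"
  unfolding dist_norm norm_vec_def L2_set_def by (simp add: UNIV_2)

lemma dist_ellipse_point:
  "dist (ellipse_point a b s) (ellipse_point a b t)
     = 2 * \<bar>sin ((s - t) / 2)\<bar> * sqrt ((a^2 + b^2) / 2 - (a^2 - b^2) / 2 * cos (s + t))"
proof -
  define m d where "m = (s + t) / 2" and "d = (s - t) / 2"
  have st: "s = m + d" "t = m - d" unfolding m_def d_def by (simp_all add: field_simps)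
  have "(a * cos s - a * cos t)^2 + (b * sin s - b * sin t)^2
      = 4 * (sin d)^2 * (a^2 * (sin m)^2 + b^2 * (cos m)^2)"
    unfolding st cos_add cos_diff sin_add sin_diff by (simp add: power2_eq_square algebra_simps)
  also have "\<dots> = (2 * \<bar>sin d\<bar>)^2 * ((a^2 + b^2) / 2 - (a^2 - b^2) / 2 * cos (s + t))"
  proof -
    have "s + t = 2 * m" unfolding m_def by simp
    then have "cos (s + t) = (cos m)^2 - (sin m)^2" by (simp add: cos_double)
    moreover have "(sin m)^2 + (cos m)^2 = 1" by simp
    ultimately have "a^2 * (sin m)^2 + b^2 * (cos m)^2 = (a^2 + b^2) / 2 - (a^2 - b^2) / 2 * cos (s + t)"
      by algebra
    then show ?thesis by (simp add: power_mult_distrib)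
  qed
  finally show ?thesis
    unfolding dist_vec2 ellipse_point_def d_def by (simp add: real_sqrt_mult)
qed

lemma ellipse_point_eq_iff:
  assumes "0 < a" "0 < b"
  shows "ellipse_point a b u = ellipse_point a b v \<longleftrightarrow> (\<exists>n::int. u = v + 2 * pi * n)"
  using assms sin_cos_eq_iff[of u v]
  by (auto simp: ellipse_point_def vec_eq_iff forall_2)

lemma frontier_ellipse:
  assumes "0 < a" "0 < b"
  shows "frontier (ellipse a b) = {x. (x$1 / a)^2 + (x$2 / b)^2 = 1}"
proof -
  let ?f = "\<lambda>x::real^2. (x$1 / a)^2 + (x$2 / b)^2"
  have cont: "continuous_on UNIV ?f" using assms by (intro continuous_intros) auto
  have "open (ellipse a b)" unfolding ellipse_def
    by (rule open_Collect_less) (use cont in auto)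
  moreover have "closure (ellipse a b) \<subseteq> {x. ?f x \<le> 1}"
    by (rule closure_minimal) (auto simp: ellipse_def intro!: closed_Collect_le cont)
  moreover have "x \<in> closure (ellipse a b)" if "?f x = 1" for x
  proof -
    define r where "r = (\<lambda>n::nat. (1 - inverse (real (Suc n))) *\<^sub>R x)"
    have "r \<longlonglongrightarrow> (1 - 0) *\<^sub>R x" unfolding r_def
      by (intro tendsto_intros LIMSEQ_inverse_real_of_nat)
    moreover have "r n \<in> ellipse a b" for n
    proof -
      define c where "c = 1 - inverse (real (Suc n))"
      have "0 \<le> c" "c < 1" unfolding c_def by (auto simp: field_simps)
      moreover have "?f (r n) = c^2 * ?f x" unfolding r_def c_def[symmetric]
        by (simp add: power2_eq_square field_simps)
      ultimately show ?thesis using that by (simp add: ellipse_def abs_square_less_1)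
    qed
    ultimately show ?thesis unfolding closure_sequential by auto
  qed
  ultimately show ?thesis
    unfolding frontier_def interior_open[OF \<open>open (ellipse a b)\<close>] by (force simp: ellipse_def)
qed

lemma frontier_ellipse_eq_image:
  assumes "0 < a" "0 < b"
  shows "frontier (ellipse a b) = ellipse_point a b ` {0..<2*pi}"
proof
  show "ellipse_point a b ` {0..<2*pi} \<subseteq> frontier (ellipse a b)"
    using assms by (auto simp: frontier_ellipse ellipse_point_def)
  show "frontier (ellipse a b) \<subseteq> ellipse_point a b ` {0..<2*pi}"
  proof
    fix x assume "x \<in> frontier (ellipse a b)"
    then have "(x$1 / a)^2 + (x$2 / b)^2 = 1" using assms by (simp add: frontier_ellipse)
    then obtain t where "0 \<le> t" "t < 2*pi" "x$1 / a = cos t" "x$2 / b = sin t"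
      using sincos_total_2pi by metis
    then show "x \<in> ellipse_point a b ` {0..<2*pi}"
      using assms by (auto simp: ellipse_point_def vec_eq_iff forall_2 field_simps)
  qed
qed

lemma dist_ellipse_point_ordered:
  assumes "u < v" "v < u + 2*pi"
  shows "dist (ellipse_point a b u) (ellipse_point a b v)
     = 2 * sin ((v - u) / 2) * sqrt ((a^2 + b^2) / 2 - (a^2 - b^2) / 2 * cos (u + v))"
proof -
  have "0 < sin ((v - u) / 2)" using assms by (intro sin_gt_zero) auto
  moreover have "sin ((u - v) / 2) = - sin ((v - u) / 2)"
    using sin_minus[of "(v - u) / 2"] by (simp add: minus_divide_left)
  ultimately show ?thesis by (simp add: dist_ellipse_point)
qed

lemma pfun_ellipse_point_le:
  assumes "0 < b" "b \<le> a"
    and "t1 < t2" "t2 < t3" "t3 < t4" "t4 < t1 + 2*pi"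
  shows "pfun (ellipse_point a b t1) (ellipse_point a b t2) (ellipse_point a b t3) (ellipse_point a b t4)
      \<le> (a/b + b/a) / 2"
proof -
  define P Q where "P = (a^2 + b^2) / 2" and "Q = (a^2 - b^2) / 2"
  have Q: "0 \<le> Q" "Q \<le> P" using assms unfolding P_def Q_def by (simp_all add: power_mono)
  have "sqrt (P^2 - Q^2) = sqrt ((a * b)^2)"
    unfolding P_def Q_def by (simp add: power2_eq_square field_simps)
  then have ab: "sqrt (P^2 - Q^2) = a * b" using assms by simp
  define x y z phi where "x = (t2 - t1) / 2" and "y = (t3 - t2) / 2" and "z = (t4 - t3) / 2"
    and "phi = (t1 + t2 + t3 + t4) / 2"
  define R where "R = (\<lambda>psi. sqrt ((P - Q * cos (phi - psi)) * (P - Q * cos (phi + psi))))"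
  have xyz: "0 < x" "0 < y" "0 < z" "x + y + z < pi"
    using assms unfolding x_def y_def z_def by (simp_all add: field_simps)
  let ?d = "\<lambda>u v. dist (ellipse_point a b u) (ellipse_point a b v)"
  have d: "?d u v = 2 * sin h * sqrt (P - Q * cos w)"
    if "u \<in> {t1, t2, t3, t4}" "v \<in> {t1, t2, t3, t4}" "u < v" "(v - u) / 2 = h" "u + v = w" for u v h w
    unfolding P_def Q_def that(4,5)[symmetric] using that assms
    by (intro dist_ellipse_point_ordered) auto
  have d12: "?d t1 t2 = 2 * sin x * sqrt (P - Q * cos (phi - (x + 2*y + z)))"
    and d34: "?d t3 t4 = 2 * sin z * sqrt (P - Q * cos (phi + (x + 2*y + z)))"
    and d14: "?d t1 t4 = 2 * sin (x + y + z) * sqrt (P - Q * cos (phi - (x - z)))"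
    and d23: "?d t2 t3 = 2 * sin y * sqrt (P - Q * cos (phi + (x - z)))"
    and d13: "?d t1 t3 = 2 * sin (x + y) * sqrt (P - Q * cos (phi - (x + z)))"
    and d24: "?d t2 t4 = 2 * sin (y + z) * sqrt (P - Q * cos (phi + (x + z)))"
    by (rule d; use assms in \<open>auto simp: x_def y_def z_def phi_def field_simps\<close>)+
  have num: "?d t1 t2 * ?d t3 t4 + ?d t1 t4 * ?d t2 t3
      = 4 * (sin x * sin z * R (x + 2*y + z) + sin (x + y + z) * sin y * R (x - z))"
    unfolding d12 d34 d14 d23 R_def real_sqrt_mult by (simp add: distrib_left mult_ac)
  have den: "?d t1 t3 * ?d t2 t4 = 4 * (sin (x + y) * sin (y + z) * R (x + z))"
    unfolding d13 d24 R_def real_sqrt_mult by (simp add: mult_ac)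
  have "0 < P - Q * cos w" for w
  proof -
    have "b^2 \<le> P - Q * cos w"
      using cos_factor_nonneg[of Q Q "cos w"] Q unfolding P_def Q_def by (simp add: algebra_simps)
    then show ?thesis using assms by (meson less_le_trans zero_less_power)
  qed
  then have "0 < R (x + z)" unfolding R_def by simp
  moreover have "0 < sin (x + y)" "0 < sin (y + z)" using xyz by (simp_all add: sin_gt_zero)
  moreover have "a * b * (sin x * sin z * R (x + 2*y + z) + sin (x + y + z) * sin y * R (x - z))
      \<le> P * (sin (x + y) * sin (y + z) * R (x + z))"
    using chord_sum_le[OF Q, of x y z phi] xyz unfolding ab R_def by (simp add: sin_gt_zero less_imp_le)
  ultimately have "pfun (ellipse_point a b t1) (ellipse_point a b t2) (ellipse_point a b t3) (ellipse_point a b t4)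
      \<le> P / (a * b)"
    using assms unfolding pfun_def num den by (simp add: divide_le_eq field_simps)
  also have "\<dots> = (a/b + b/a) / 2" using assms unfolding P_def by (simp add: field_simps power2_eq_square)
  finally show ?thesis .
qed

section \<open>Arbitrary parametrizations of the boundary\<close>

lemma continuous_angle_cyclic_order:
  fixes \<theta> :: "real \<Rightarrow> real"
  assumes cont: "continuous_on {s1..s4} \<theta>"
    and inj: "\<And>u v n. u \<in> {s1..s4} \<Longrightarrow> v \<in> {s1..s4} \<Longrightarrow> \<theta> u = \<theta> v + 2 * pi * of_int n \<Longrightarrow> u = v"
    and s: "s1 < s2" "s2 < s3" "s3 < s4"
  shows "\<theta> s1 < \<theta> s2 \<and> \<theta> s2 < \<theta> s3 \<and> \<theta> s3 < \<theta> s4 \<and> \<theta> s4 < \<theta> s1 + 2 * pi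
       \<or> \<theta> s4 < \<theta> s3 \<and> \<theta> s3 < \<theta> s2 \<and> \<theta> s2 < \<theta> s1 \<and> \<theta> s1 < \<theta> s4 + 2 * pi"
proof -
  have inj_on: "inj_on \<theta> {s1..s4}"
    using inj[where n = 0] by (auto intro: inj_onI)
  have mono: "(\<theta> u < \<theta> w \<and> \<theta> w < \<theta> v) \<or> (\<theta> v < \<theta> w \<and> \<theta> w < \<theta> u)"
    if "s1 \<le> u" "u < w" "w < v" "v \<le> s4" for u v w
    using continuous_inj_imp_mono[of u w v \<theta>] that
      continuous_on_subset[OF cont, of "{u..v}"] inj_on_subset[OF inj_on, of "{u..v}"] by auto
  \<comment> \<open>a winding of \<open>2 pi\<close> within \<open>[s1, s4]\<close> would hit the same point twice\<close>
  have no_wrap: "\<theta> v < \<theta> u + 2 * pi" if "u \<in> {s1..s4}" "v \<in> {s1..s4}" for u v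
  proof (rule ccontr)
    assume "\<not> \<theta> v < \<theta> u + 2 * pi"
    moreover have "continuous_on {min u v..max u v} \<theta>"
      using that by (intro continuous_on_subset[OF cont]) auto
    ultimately obtain w where w: "w \<in> {min u v..max u v}" "\<theta> w = \<theta> u + 2 * pi"
      using IVT'[of \<theta> u "\<theta> u + 2 * pi" v] IVT2'[of \<theta> u "\<theta> u + 2 * pi" v]
      by (cases "u \<le> v") (auto simp: min_def max_def)
    then have "w = u" using inj[of w u 1] that by (auto simp: min_def max_def split: if_splits)
    then show False using w by simp
  qed
  show ?thesis
    using mono[of s1 s2 s4] mono[of s1 s3 s4] mono[of s2 s3 s4] no_wrap[of s1 s4] no_wrap[of s4 s1] s
    by auto
qed

lemma ellipse_path_angle_lift:
  assumes "0 < a" "0 < b" "path g" "path_image g \<subseteq> frontier (ellipse a b)"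
  obtains \<theta> where "continuous_on {0..1} \<theta>" "\<And>s. s \<in> {0..1} \<Longrightarrow> g s = ellipse_point a b (\<theta> s)"
proof -
  \<comment> \<open>rescale to the unit circle in \<open>\<complex>\<close> and take a continuous logarithm\<close>
  define h where "h = (\<lambda>s. Complex (g s $ 1 / a) (g s $ 2 / b))"
  have on_ellipse: "(g s $ 1 / a)^2 + (g s $ 2 / b)^2 = 1" if "s \<in> {0..1}" for s
  proof -
    have "g s \<in> path_image g" using that by (simp add: path_image_def)
    with assms show ?thesis by (auto simp: frontier_ellipse)
  qed
  have "continuous_on {0..1} h"
    using assms unfolding h_def path_def by (intro continuous_intros) auto
  moreover have "h s \<noteq> 0" if "s \<in> {0..1}" for s
    using on_ellipse[OF that] by (auto simp: h_def complex_eq_iff)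
  ultimately obtain L where L: "continuous_on {0..1} L" "\<And>s. s \<in> {0..1} \<Longrightarrow> h s = exp (L s)"
    using continuous_logarithm_on_contractible[of "{0..1::real}" h] convex_imp_contractible[of "{0..1::real}"]
    by auto
  show ?thesis
  proof
    show "continuous_on {0..1} (\<lambda>s. Im (L s))" by (intro continuous_intros L)
    fix s :: real assume s: "s \<in> {0..1}"
    have "cmod (h s) = 1" using on_ellipse[OF s] by (simp add: h_def cmod_def)
    then have "Re (L s) = 0" using L(2)[OF s] by simp
    then have "h s = Complex (cos (Im (L s))) (sin (Im (L s)))"
      using L(2)[OF s] by (simp add: complex_eq_iff exp_eq_polar)
    then show "g s = ellipse_point a b (Im (L s))"
      using assms unfolding h_def by (simp add: ellipse_point_def vec_eq_iff forall_2 field_simps)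
  qed
qed

lemma pfun_reverse: "pfun a1 a2 a3 a4 = pfun a4 a3 a2 a1"
  unfolding pfun_def by (simp add: dist_commute mult_ac add_ac)

lemma simple_path_ellipse_pfun_le:
  assumes "0 < b" "b \<le> a"
    and g: "simple_path g" "path_image g = frontier (ellipse a b)"
    and s: "0 \<le> s1" "s1 < s2" "s2 < s3" "s3 < s4" "s4 < 1"
  shows "pfun (g s1) (g s2) (g s3) (g s4) \<le> (a/b + b/a) / 2"
proof -
  have a: "0 < a" using assms by simp
  obtain \<theta> where cont: "continuous_on {0..1} \<theta>"
    and g_eq: "\<And>s. s \<in> {0..1} \<Longrightarrow> g s = ellipse_point a b (\<theta> s)"
    using ellipse_path_angle_lift[OF a \<open>0 < b\<close> simple_path_imp_path[OF g(1)] equalityD1[OF g(2)]]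
    by blast
  have "u = v" if "u \<in> {s1..s4}" "v \<in> {s1..s4}" "\<theta> u = \<theta> v + 2 * pi * of_int n" for u v n
  proof -
    have "g u = g v" using that s g_eq ellipse_point_eq_iff[OF a \<open>0 < b\<close>] by auto
    then show "u = v" using g(1) that s unfolding simple_path_def loop_free_def by fastforce
  qed
  then consider
      "\<theta> s1 < \<theta> s2" "\<theta> s2 < \<theta> s3" "\<theta> s3 < \<theta> s4" "\<theta> s4 < \<theta> s1 + 2 * pi"
    | "\<theta> s4 < \<theta> s3" "\<theta> s3 < \<theta> s2" "\<theta> s2 < \<theta> s1" "\<theta> s1 < \<theta> s4 + 2 * pi"
    using continuous_angle_cyclic_order[of s1 s4 \<theta> s2 s3] continuous_on_subset[OF cont] s by fastforce
  moreover have gs: "g s1 = ellipse_point a b (\<theta> s1)" "g s2 = ellipse_point a b (\<theta> s2)"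
    "g s3 = ellipse_point a b (\<theta> s3)" "g s4 = ellipse_point a b (\<theta> s4)"
    using g_eq s by auto
  ultimately show ?thesis
  proof cases
    case 1
    then show ?thesis unfolding gs by (rule pfun_ellipse_point_le[OF assms(1,2)])
  next
    case 2
    then show ?thesis unfolding gs pfun_reverse[of "ellipse_point a b (\<theta> s1)"]
      by (rule pfun_ellipse_point_le[OF assms(1,2)])
  qed
qed

section \<open>The value of \<open>P(E)\<close>\<close>

definition ellipse_loop :: "real \<Rightarrow> real \<Rightarrow> real \<Rightarrow> real^2" where
  "ellipse_loop a b s = ellipse_point a b (2 * pi * s)"

lemma ellipse_loop:
  assumes "0 < a" "0 < b"
  shows "simple_path (ellipse_loop a b)" "pathfinish (ellipse_loop a b) = pathstart (ellipse_loop a b)"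
    "path_image (ellipse_loop a b) = frontier (ellipse a b)"
proof -
  have "ellipse_loop a b = (\<lambda>s. (a * cos (2 * pi * s)) *\<^sub>R axis 1 1 + (b * sin (2 * pi * s)) *\<^sub>R axis 2 1)"
    by (simp add: fun_eq_iff ellipse_loop_def ellipse_point_def vec_eq_iff forall_2 axis_def)
  then have "continuous_on {0..1} (ellipse_loop a b)"
    by (simp only:) (intro continuous_intros)
  moreover have "loop_free (ellipse_loop a b)" unfolding loop_free_def
  proof (intro ballI impI)
    fix x y :: real assume xy: "x \<in> {0..1}" "y \<in> {0..1}" "ellipse_loop a b x = ellipse_loop a b y"
    then obtain n :: int where "2 * pi * x = 2 * pi * y + 2 * pi * n"
      using ellipse_point_eq_iff[OF assms] unfolding ellipse_loop_def by blast
    then have "2 * pi * (x - y) = 2 * pi * n" by (simp add: algebra_simps)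
    then have "x - y = n" by simp
    moreover have "-1 \<le> x - y" "x - y \<le> 1" using xy by auto
    ultimately have "n \<in> {-1, 0, 1}" by auto
    with \<open>x - y = n\<close> xy show "x = y \<or> x = 0 \<and> y = 1 \<or> x = 1 \<and> y = 0" by auto
  qed
  ultimately show "simple_path (ellipse_loop a b)" by (simp add: simple_path_def path_def)
  show "pathfinish (ellipse_loop a b) = pathstart (ellipse_loop a b)"
    by (simp add: pathfinish_def pathstart_def ellipse_loop_def ellipse_point_def)
  show "path_image (ellipse_loop a b) = frontier (ellipse a b)"
  proof
    show "path_image (ellipse_loop a b) \<subseteq> frontier (ellipse a b)"
      using assms by (auto simp: path_image_def ellipse_loop_def ellipse_point_def frontier_ellipse)
    show "frontier (ellipse a b) \<subseteq> path_image (ellipse_loop a b)"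
    proof
      fix x assume "x \<in> frontier (ellipse a b)"
      then obtain t where "t \<in> {0..<2*pi}" "x = ellipse_point a b t"
        using frontier_ellipse_eq_image[OF assms] by auto
      then have "t / (2 * pi) \<in> {0..1}" "x = ellipse_loop a b (t / (2 * pi))"
        by (auto simp: ellipse_loop_def)
      then show "x \<in> path_image (ellipse_loop a b)" unfolding path_image_def by blast
    qed
  qed
qed

lemma pfun_ellipse_vertices:
  assumes "0 < a" "0 < b"
  shows "pfun (ellipse_loop a b 0) (ellipse_loop a b (1/4)) (ellipse_loop a b (1/2)) (ellipse_loop a b (3/4))
       = (a/b + b/a) / 2"
proof -
  have "cos (3 * pi / 2) = 0" "sin (3 * pi / 2) = -1"
    using cos_add[of pi "pi/2"] sin_add[of pi "pi/2"] by (simp_all add: add_divide_distrib)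
  then have "ellipse_loop a b 0 = vector [a, 0]" "ellipse_loop a b (1/4) = vector [0, b]"
    "ellipse_loop a b (1/2) = vector [-a, 0]" "ellipse_loop a b (3/4) = vector [0, -b]"
    by (simp_all add: ellipse_loop_def ellipse_point_def)
  then have "dist (ellipse_loop a b 0) (ellipse_loop a b (1/4)) = sqrt (a^2 + b^2)"
    "dist (ellipse_loop a b (1/2)) (ellipse_loop a b (3/4)) = sqrt (a^2 + b^2)"
    "dist (ellipse_loop a b 0) (ellipse_loop a b (3/4)) = sqrt (a^2 + b^2)"
    "dist (ellipse_loop a b (1/4)) (ellipse_loop a b (1/2)) = sqrt (a^2 + b^2)"
    "dist (ellipse_loop a b 0) (ellipse_loop a b (1/2)) = 2 * a"
    "dist (ellipse_loop a b (1/4)) (ellipse_loop a b (3/4)) = 2 * b"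
    using assms by (simp_all add: dist_vec2 power2_eq_square real_sqrt_mult)
  then show ?thesis
    using assms unfolding pfun_def by (simp add: field_simps power2_eq_square)
qed

lemma PJ_ellipse:
  assumes "0 < b" "b \<le> a"
  shows "PJ (ellipse a b) = ereal ((a/b + b/a) / 2)"
proof (rule antisym)
  have a: "0 < a" using assms by simp
  show "PJ (ellipse a b) \<le> ereal ((a/b + b/a) / 2)"
    unfolding PJ_def
  proof (rule SUP_least, clarify)
    fix g :: "real \<Rightarrow> real^2" and s1 s2 s3 s4 :: real
    assume "simple_path g" "path_image g = frontier (ellipse a b)"
      "0 \<le> s1" "s1 < s2" "s2 < s3" "s3 < s4" "s4 < 1"
    then show "ereal (pfun (g s1) (g s2) (g s3) (g s4)) \<le> ereal ((a/b + b/a) / 2)"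
      using simple_path_ellipse_pfun_le[OF assms] by simp
  qed
  show "ereal ((a/b + b/a) / 2) \<le> PJ (ellipse a b)"
    unfolding PJ_def
  proof (rule SUP_upper2)
    let ?g = "ellipse_loop a b"
    show "(?g 0, ?g (1/4), ?g (1/2), ?g (3/4)) \<in> {(a1, a2, a3, a4). \<exists>g s1 s2 s3 s4.
        simple_path g \<and> pathfinish g = pathstart g \<and> path_image g = frontier (ellipse a b) \<and>
        0 \<le> s1 \<and> s1 < s2 \<and> s2 < s3 \<and> s3 < s4 \<and> s4 < 1 \<and>
        a1 = g s1 \<and> a2 = g s2 \<and> a3 = g s3 \<and> a4 = g s4}"
      using ellipse_loop[OF a assms(1)]
      by (simp, intro exI[of _ ?g] exI[of _ 0] exI[of _ "1/4"] exI[of _ "1/2"] exI[of _ "3/4"] conjI) simp_all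
    show "ereal ((a/b + b/a) / 2) \<le> ereal (case (?g 0, ?g (1/4), ?g (1/2), ?g (3/4)) of
        (a1, a2, a3, a4) \<Rightarrow> pfun a1 a2 a3 a4)"
      using pfun_ellipse_vertices[OF a assms(1)] by simp
  qed
qed

section \<open>Rational bounds for the sine\<close>

lemma sin_ge_cubic:
  fixes x :: real
  assumes "0 \<le> x" "x \<le> pi"
  shows "x - x^3/6 \<le> sin x"
proof (cases "x = 0")
  case False
  then have "0 < x" using assms by simp
  from Maclaurin_sin_expansion3[of 4 x, OF _ this] obtain t where
    t: "0 < t" "t < x" "sin x = (\<Sum>m<4. sin_coeff m * x ^ m) + sin (t + 2 * pi) / fact 4 * x ^ 4"
    by auto
  have "{..<4::nat} = {0, 1, 2, 3}" by auto
  then have "(\<Sum>m<4. sin_coeff m * x ^ m) = x - x^3/6"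
    by (simp add: sin_coeff_def fact_numeral)
  moreover have "0 \<le> sin (t + 2 * pi)" using t assms by (simp add: sin_ge_zero)
  ultimately show ?thesis using t(3) by simp
qed simp

lemma cos_le_quartic:
  fixes t :: real
  assumes "0 \<le> t" "t \<le> pi"
  shows "cos t \<le> 1 - t^2/2 + t^4/24"
proof (cases "t = 0")
  case False
  then have "0 < t" using assms by simp
  from Maclaurin_cos_expansion2[OF this, of 5] obtain u where
    u: "0 < u" "u < t" "cos t = (\<Sum>m<5. cos_coeff m * t ^ m) + cos (u + 5 / 2 * pi) / fact 5 * t ^ 5"
    by auto
  have "cos (u + 5 / 2 * pi) = - sin u"
    using cos_periodic[of "u + pi/2"] by (simp add: cos_add algebra_simps)
  moreover have "{..<5::nat} = {0, 1, 2, 3, 4}" by auto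
  then have "(\<Sum>m<5. cos_coeff m * t ^ m) = 1 - t^2/2 + t^4/24"
    by (simp add: cos_coeff_def fact_numeral)
  moreover have "0 \<le> sin u" using u assms by (intro sin_ge_zero) auto
  ultimately show ?thesis using u(3) \<open>0 < t\<close> by simp
qed simp

lemma sin_ge_rational_bound:
  fixes x :: real
  assumes "0 \<le> x" "x \<le> pi/2"
  shows "pi^2 * x / (pi^2 + 4 * x^2) \<le> sin x"
proof -
  have "pi * pi < 16/5 * (16/5)" using pi_approx by (intro mult_strict_mono) auto
  then have "pi^2 < 256/25" by (simp add: power2_eq_square)
  moreover have "x^2 \<le> (pi/2)^2" using assms by (intro power_mono) auto
  ultimately have "0 \<le> 4 - pi^2/6 - 2 * x^2/3" by (simp add: power_divide)
  then have "0 \<le> x^3 * (4 - pi^2/6 - 2 * x^2/3)" using assms by simp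
  also have "x^3 * (4 - pi^2/6 - 2 * x^2/3) = (x - x^3/6) * (pi^2 + 4 * x^2) - pi^2 * x"
    by (simp add: power2_eq_square power3_eq_cube algebra_simps)
  finally have "pi^2 * x \<le> (x - x^3/6) * (pi^2 + 4 * x^2)" by simp
  also have "\<dots> \<le> sin x * (pi^2 + 4 * x^2)"
    using sin_ge_cubic[of x] assms by (intro mult_right_mono) auto
  finally show ?thesis by (simp add: divide_le_eq add_pos_nonneg)
qed

lemma sin_le_rational_bound:
  fixes x :: real
  assumes "0 \<le> x" "x \<le> pi/2"
  shows "sin x \<le> 4 * pi * x / (pi^2 + 4 * x^2)"
proof -
  have pi: "157/50 < pi" "pi < 63/20" using pi_approx by simp_all
  \<comment> \<open>\<open>sin x \<le> x\<close> suffices up to \<open>4/5\<close>; beyond that use the quartic bound for \<open>cos (pi/2 - x)\<close>\<close>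
  have "sin x * (pi^2 + 4 * x^2) \<le> 4 * pi * x"
  proof (cases "x \<le> 4/5")
    case True
    have "x^2 \<le> (4/5)^2" using True assms by (intro power_mono) auto
    moreover have "157/50 * (17/20) \<le> pi * (4 - pi)" using pi by (intro mult_mono) auto
    ultimately have "pi^2 + 4 * x^2 \<le> 4 * pi" by (simp add: power2_eq_square algebra_simps)
    then have "x * (pi^2 + 4 * x^2) \<le> 4 * pi * x" using assms by (simp add: mult_left_mono mult.commute)
    moreover have "sin x * (pi^2 + 4 * x^2) \<le> x * (pi^2 + 4 * x^2)"
      using sin_x_le_x assms by (intro mult_right_mono) auto
    ultimately show ?thesis by linarith
  next
    case False
    define t where "t = pi/2 - x"
    have t: "0 \<le> t" "t \<le> 78/100" using assms False pi unfolding t_def by simp_all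
    have x: "x = pi/2 - t" unfolding t_def by simp
    have "t^2 \<le> (78/100)^2" using t by (intro power_mono) auto
    then have "47/100 \<le> 1/2 - t^2/24" by (simp add: power2_eq_square)
    moreover have "9 \<le> 2 * pi^2 - 4 * pi * t + 4 * t^2"
    proof -
      have "pi * t \<le> 63/20 * (78/100)" using pi t by (intro mult_mono) auto
      moreover have "157/50 * (157/50) \<le> pi * pi" using pi by (intro mult_mono) auto
      moreover have "0 \<le> t * t" by simp
      ultimately show ?thesis unfolding power2_eq_square by linarith
    qed
    ultimately have "47/100 * 9 \<le> (1/2 - t^2/24) * (2 * pi^2 - 4 * pi * t + 4 * t^2)"
      by (intro mult_mono) auto
    then have "t^2 * ((1/2 - t^2/24) * (2 * pi^2 - 4 * pi * t + 4 * t^2) - 4) \<ge> 0" by simp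
    moreover have "cos t * (2 * pi^2 - 4 * pi * t + 4 * t^2)
        \<le> (1 - t^2/2 + t^4/24) * (2 * pi^2 - 4 * pi * t + 4 * t^2)"
    proof (rule mult_right_mono)
      show "cos t \<le> 1 - t^2/2 + t^4/24" using cos_le_quartic[of t] t pi by simp
      have "2 * pi^2 - 4 * pi * t + 4 * t^2 = pi^2 + 4 * x^2"
        unfolding x by (simp add: power2_eq_square algebra_simps)
      then show "0 \<le> 2 * pi^2 - 4 * pi * t + 4 * t^2" by (simp only:) simp
    qed
    ultimately have "cos t * (2 * pi^2 - 4 * pi * t + 4 * t^2) \<le> 2 * pi^2 - 4 * pi * t"
      by (simp add: power2_eq_square power4_eq_xxxx algebra_simps)
    moreover have "sin x = cos t" unfolding t_def by (simp add: cos_diff)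
    ultimately show ?thesis unfolding x by (simp add: power2_eq_square algebra_simps)
  qed
  then show ?thesis by (simp add: le_divide_eq add_pos_nonneg)
qed

lemma inverse_sin_half_pi_bounds:
  fixes t :: real
  assumes "0 < t" "t \<le> 1"
  shows "(1/t + t) / 2 \<le> 1 / sin (t * pi / 2)"
    and "1 / sin (t * pi / 2) \<le> 2 / pi * (1/t + t)"
proof -
  let ?x = "t * pi / 2"
  have x: "0 \<le> ?x" "?x \<le> pi/2" using assms by auto
  have sin_pos: "0 < sin ?x" using assms by (intro sin_gt_zero) auto
  have den: "pi^2 + 4 * ?x^2 = pi^2 * (1 + t^2)" by (simp add: power2_eq_square algebra_simps)
  have "sin ?x \<le> 2 * t / (1 + t^2)"
    using sin_le_rational_bound[OF x] unfolding den by (simp add: power2_eq_square)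
  then have "sin ?x * (1 + t^2) \<le> 2 * t" by (simp add: pos_le_divide_eq add_pos_nonneg)
  then show "(1/t + t) / 2 \<le> 1 / sin ?x"
    using assms sin_pos by (simp add: field_simps power2_eq_square)
  have "t * pi / (2 * (1 + t^2)) \<le> sin ?x"
    using sin_ge_rational_bound[OF x] unfolding den by (simp add: power2_eq_square)
  then have "t * pi \<le> sin ?x * (2 * (1 + t^2))" by (simp add: pos_divide_le_eq add_pos_nonneg)
  then show "1 / sin ?x \<le> 2 / pi * (1/t + t)"
    using assms sin_pos by (simp add: field_simps power2_eq_square)
qed

theorem theorem1p6:
  fixes a b :: real
  assumes "0 < b" and "b \<le> a"
  shows "ereal ((a/b + b/a) / 2) \<le> PJ (ellipse a b)
       \<and> PJ (ellipse a b) \<le> ereal (1 / sin (b * pi / (2 * a)))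
       \<and> 1 / sin (b * pi / (2 * a)) \<le> (2 / pi) * (a/b + b/a)"
proof -
  have t: "0 < b / a" "b / a \<le> 1" using assms by simp_all
  have "b * pi / (2 * a) = (b / a) * pi / 2" "a / b = 1 / (b / a)" by simp_all
  then have "(a/b + b/a) / 2 \<le> 1 / sin (b * pi / (2 * a))
      \<and> 1 / sin (b * pi / (2 * a)) \<le> (2 / pi) * (a/b + b/a)"
    using inverse_sin_half_pi_bounds[OF t] by (simp only:)
  then show ?thesis using PJ_ellipse[OF assms] by simp
qed

end
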